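(* Let $m, n_0, n_1$ be positive integers and $n(\lambda) = n_0 + n_1\lambda$. Suppose nonzero polynomials $x(\lambda), y(\lambda), z(\lambda) \in \mathbb{Q}[\lambda]$ satisfy $$\frac{m}{n(\lambda)} = \frac{1}{x(\lambda)} + \frac{1}{y(\lambda)} + \frac{1}{z(\lambda)}$$ identically, where $z(\lambda) = z_0 + z_1\lambda$ with $z_1 \neq 0$, and both $x$ and $y$ have degree larger than $1$. Then $z_1 = n_1/m$.
   Context: $\lambda$ is an indeterminate; the equation is an identity of rational functions in $\lambda$. *)

theory Defs
  imports "HOL-Computational_Algebra.Polynomial" "HOL-Computational_Algebra.Fraction_Field"
begin

definition rf :: "rat poly \<Rightarrow> rat poly fract" where
  "rf p = Fract p 1"

end

theory Submission
  imports Defs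
begin

text \<open>Clearing denominators turns the identity into \<open>(m z - n) x y = n z (x + y)\<close>.
  The left side has degree \<open>deg (m z - n) + deg x + deg y\<close>, the right side at most
  \<open>2 + max (deg x) (deg y)\<close>; as \<open>min (deg x) (deg y) \<ge> 2\<close>, the linear polynomial
  \<open>m z - n\<close> must be constant, i.e. its leading coefficient \<open>m z\<^sub>1 - n\<^sub>1\<close> vanishes.\<close>

lemma rf_mult: "rf (p * q) = rf p * rf q"
  by (simp add: rf_def)

lemma rf_add: "rf (p + q) = rf p + rf q"
  by (simp add: rf_def)

lemma rf_eq_iff: "rf p = rf q \<longleftrightarrow> p = q"
  by (simp add: rf_def eq_fract)

lemma rf_eq_0_iff: "rf p = 0 \<longleftrightarrow> p = 0"
  by (simp add: rf_def Zero_fract_def eq_fract)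

lemma rf_eq_sum_of_reciprocals_imp_poly_eq:
  assumes "x \<noteq> 0" "y \<noteq> 0" "z \<noteq> 0" "n \<noteq> 0"
    and "rf M / rf n = 1 / rf x + 1 / rf y + 1 / rf z"
  shows "M * x * y * z = n * (y * z + x * z + x * y)"
proof -
  have "rf M * rf x * rf y * rf z = rf n * (rf y * rf z + rf x * rf z + rf x * rf y)"
    using assms by (simp add: rf_eq_0_iff field_simps)
  then have "rf (M * x * y * z) = rf (n * (y * z + x * z + x * y))"
    by (simp add: rf_mult rf_add)
  then show ?thesis
    by (simp add: rf_eq_iff)
qed

lemma degree_eq_0_if_mult_eq_mult_add:
  fixes w x y u v :: "'a::idom poly"
  assumes eq: "w * x * y = u * v * (x + y)"
    and deg_uv: "degree u + degree v \<le> min (degree x) (degree y)"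
    and "degree x > 0" "degree y > 0"
  shows "degree w = 0"
proof (cases "w = 0")
  case False
  have "x \<noteq> 0" "y \<noteq> 0"
    using assms(3,4) by auto
  then have "degree w + degree x + degree y = degree (w * x * y)"
    using False by (simp add: degree_mult_eq)
  also have "\<dots> \<le> degree u + degree v + degree (x + y)"
    unfolding eq by (meson add_le_mono degree_mult_le order_trans order_refl)
  also have "\<dots> \<le> min (degree x) (degree y) + max (degree x) (degree y)"
    using deg_uv degree_add_le_max by (rule add_mono)
  finally show ?thesis
    by linarith
qed simp

theorem lemma3:
  fixes m n0 n1 :: nat and x y z :: "rat poly" and z0 z1 :: rat
  assumes "m > 0" and "n0 > 0" and "n1 > 0"
    and "x \<noteq> 0" and "y \<noteq> 0" and "z \<noteq> 0"
    and "z = [:z0, z1:]" and "z1 \<noteq> 0"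
    and "degree x > 1" and "degree y > 1"
    and "rf [:of_nat m:] / rf [:of_nat n0, of_nat n1:]
         = 1 / rf x + 1 / rf y + 1 / rf z"
  shows "z1 = of_nat n1 / of_nat m"
proof -
  define n :: "rat poly" where "n = [:of_nat n0, of_nat n1:]"
  define M :: "rat poly" where "M = [:of_nat m:]"
  have "n \<noteq> 0"
    using assms(2) by (simp add: n_def)
  then have "M * x * y * z = n * (y * z + x * z + x * y)"
    using assms(4-6,11) by (intro rf_eq_sum_of_reciprocals_imp_poly_eq) (simp_all add: n_def M_def)
  then have "(M * z - n) * x * y = n * z * (x + y)"
    by (simp add: algebra_simps)
  moreover have "degree n + degree z \<le> min (degree x) (degree y)"
    using assms(7,9,10) by (simp add: n_def)
  ultimately have "degree (M * z - n) = 0"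
    using assms(9,10) by (intro degree_eq_0_if_mult_eq_mult_add) auto
  then have "coeff (M * z - n) 1 = 0"
    by (intro coeff_eq_0) simp
  then show ?thesis
    using assms(1) by (simp add: M_def n_def assms(7) field_simps)
qed

end
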